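(* Let $\alpha>1$ be an integer with $\alpha\equiv 2\pmod 3$. Then for every positive integer $a$, $$S_3^1(a)\leq 1.3\, a^{\log_3 2},$$ where $S_3^1(a)$ is the number of integers $0\le s<a$ such that the base-$3$ representation of $\alpha^s$ contains no digit equal to $2$.
   Context: In general, for an odd prime $p$, a base-$p$ digit $d$ is large if $d\ge p/2$, and $S_p^n(a)=\#\{0\le s<a : (\alpha^s)_p\text{ contains fewer than } n \text{ large digits}\}$; for $p=3$, $n=1$ this is as stated in the claim. *)

theory Defs
  imports Complex_Main
begin

fun digits :: "nat \<Rightarrow> nat \<Rightarrow> nat list" where
  "digits p m = (if p < 2 \<or> m = 0 then [] else m mod p # digits p (m div p))"

declare digits.simps[simp del]

definition num_large_digits :: "nat \<Rightarrow> nat \<Rightarrow> nat" where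
  "num_large_digits p m = length (filter (\<lambda>d. 2 * d \<ge> p) (digits p m))"

definition S :: "nat \<Rightarrow> nat \<Rightarrow> nat \<Rightarrow> nat \<Rightarrow> nat" where
  "S \<alpha> p n a = card {s. s < a \<and> num_large_digits p (\<alpha> ^ s) < n}"

end

theory Submission
  imports Defs "HOL-Number_Theory.Number_Theory"
begin

(* If alpha = 2 (mod 3), every odd power of alpha has last ternary digit 2, so only exponents
   s = 2t count, and beta = alpha^2 = 1 + 3^j c with j >= 1 and 3 not dividing c.  Lifting the
   exponent, the order of beta modulo 3^(j+m) is a multiple of 3^m, so the ternary digits of
   beta^t in positions j, ..., j+m-1 determine t < 3^m.  At most 2^m such blocks of m digits
   avoid the digit 2, and for the least m with a <= 2 * 3^m this is at most 1.3 a^(log_3 2)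
   because 2 <= 1.3 * 2^(log_3 2). *)

lemma one_plus_power_pow_cong:
  fixes p j c d :: nat
  assumes "j \<ge> 1"
  shows "[(1 + p^j*c)^d = 1 + d*p^j*c] (mod p^(j+1))"
proof (induction d)
  case 0
  show ?case by simp
next
  case (Suc d)
  have "[(1 + p^j*c)^Suc d = (1 + d*p^j*c) * (1 + p^j*c)] (mod p^(j+1))"
    unfolding power_Suc2 by (rule cong_mult[OF Suc.IH cong_refl])
  also have "(1 + d*p^j*c) * (1 + p^j*c) = 1 + Suc d*p^j*c + p^(j+j) * (d*c*c)"
    by (simp add: algebra_simps power_add)
  also have "[\<dots> = 1 + Suc d*p^j*c] (mod p^(j+1))"
  proof -
    have "p^(j+1) dvd p^(j+j) * (d*c*c)"
      using assms by (intro dvd_mult2 le_imp_power_dvd) simp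
    then show ?thesis by (simp only: cong_add_lcancel_0_nat cong_0_iff)
  qed
  finally show ?case .
qed

lemma prime_dvd_exponent_if_pow_cong_1:
  fixes p j c d :: nat
  assumes "prime p" "j \<ge> 1" "\<not> p dvd c" and cong: "[(1 + p^j*c)^d = 1] (mod p^(j+1))"
  shows "p dvd d"
proof -
  have "[1 + d*p^j*c = 1] (mod p^(j+1))"
    using cong_trans[OF cong_sym[OF one_plus_power_pow_cong[OF \<open>j \<ge> 1\<close>]] cong] .
  then have "p^(j+1) dvd d*p^j*c"
    by (simp only: cong_add_lcancel_0_nat cong_0_iff)
  then have "p^j * p dvd p^j * (d*c)"
    by (simp add: ac_simps)
  then have "p dvd d*c"
    using \<open>prime p\<close> by (simp add: prime_gt_0_nat)
  then show ?thesis
    using assms(1,3) prime_dvd_mult_nat by blast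
qed

lemma cube_one_plus_three_power:
  fixes j c :: nat
  assumes "j \<ge> 1" "\<not> 3 dvd c"
  obtains c' where "(1 + 3^j*c)^3 = 1 + 3^(j+1)*c'" "\<not> 3 dvd c'"
proof -
  obtain k where k: "j = Suc k"
    using assms(1) by (cases j) auto
  define x where "x = (3::nat)^j*c"
  let ?c' = "c + 3^j*c^2 + 3^(2*k+1)*c^3"
  have "(1 + x)^3 = 1 + 3*x + 3*x^2 + x^3"
    by (simp add: power3_eq_cube power2_eq_square algebra_simps)
  also have "\<dots> = 1 + 3^(j+1)*?c'"
    unfolding x_def k
    by (simp add: algebra_simps power_mult_distrib power_add mult_2 mult_2_right
        power2_eq_square power3_eq_cube)
  finally have "(1 + 3^j*c)^3 = 1 + 3^(j+1)*?c'"
    unfolding x_def .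
  moreover have "\<not> 3 dvd ?c'"
    using assms(2) by (simp add: k dvd_add_left_iff)
  ultimately show ?thesis by (rule that)
qed

lemma three_power_dvd_exponent_if_pow_cong_1:
  fixes n j c d :: nat
  assumes "j \<ge> 1" "\<not> 3 dvd c" "[(1 + 3^j*c)^d = 1] (mod 3^(j+n))"
  shows "3^n dvd d"
  using assms
proof (induction n arbitrary: j c d)
  case 0
  then show ?case by simp
next
  case (Suc n)
  have "[(1 + 3^j*c)^d = 1] (mod 3^(j+1))"
    using Suc.prems(3) by (rule cong_dvd_modulus_nat) (simp add: le_imp_power_dvd)
  then have "3 dvd d"
    using Suc.prems(1,2) by (intro prime_dvd_exponent_if_pow_cong_1) auto
  then obtain e where d: "d = 3*e" ..
  obtain c' where c': "(1 + 3^j*c)^3 = 1 + 3^(j+1)*c'" "\<not> 3 dvd c'"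
    using cube_one_plus_three_power[OF Suc.prems(1,2)] .
  have "(1 + 3^(j+1)*c')^e = (1 + 3^j*c)^d"
    by (simp only: d power_mult c'(1))
  then have "[(1 + 3^(j+1)*c')^e = 1] (mod 3^((j+1)+n))"
    using Suc.prems(3) by simp
  then have "3^n dvd e"
    using Suc.IH[of "j+1" c' e] c'(2) by simp
  then show ?case
    by (simp add: d)
qed

lemma one_plus_three_power_decomp:
  fixes \<beta> :: nat
  assumes "\<beta> mod 3 = 1" "\<beta> > 1"
  obtains j c where "\<beta> = 1 + 3^j*c" "j \<ge> 1" "\<not> 3 dvd c"
proof -
  have "\<beta> - 1 \<noteq> 0"
    using assms(2) by simp
  then obtain c where c: "\<beta> - 1 = 3^multiplicity 3 (\<beta> - 1) * c" "\<not> 3 dvd c"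
    using multiplicity_decompose'[of "\<beta> - 1" 3] by auto
  have "3 dvd \<beta> - 1"
    using assms by (simp add: mod_eq_dvd_iff_nat[symmetric])
  then have "multiplicity 3 (\<beta> - 1) \<ge> 1"
    using c by (cases "multiplicity 3 (\<beta> - 1)") auto
  moreover have "\<beta> = 1 + 3^multiplicity 3 (\<beta> - 1) * c"
    using c(1) assms(2) by simp
  ultimately show ?thesis
    using c(2) that by blast
qed

lemma inj_on_pow_div_mod_three_power:
  fixes \<beta> c j m :: nat
  assumes \<beta>: "\<beta> = 1 + 3^j*c" and "j \<ge> 1" "\<not> 3 dvd c"
  shows "inj_on (\<lambda>t. \<beta>^t div 3^j mod 3^m) {..<3^m}"
proof (rule inj_onI)
  let ?n = "3^(j+m) :: nat"
  have "[\<beta> = 1] (mod 3^j)"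
    unfolding \<beta> cong_def by (simp only: mod_mult_self2)
  then have low: "\<beta>^s mod 3^j = 1 mod 3^j" for s
    using cong_pow[of \<beta> 1 "3^j" s] by (simp add: cong_def)
  have "[\<beta> = 1] (mod 3)"
    using \<open>[\<beta> = 1] (mod 3^j)\<close> by (rule cong_dvd_modulus_nat) (use assms(2) in \<open>simp add: dvd_power\<close>)
  then have "coprime ?n \<beta>"
    using cong_imp_coprime[OF cong_sym, of \<beta> 1 3] by (simp add: coprime_commute)
  have "3^m dvd ord ?n \<beta>"
  proof -
    have "[\<beta>^ord ?n \<beta> = 1] (mod ?n)"
      unfolding ord_divides by (rule dvd_refl)
    then show ?thesis
      using three_power_dvd_exponent_if_pow_cong_1[of j c "ord ?n \<beta>" m] assms(2,3)
      unfolding \<beta>[symmetric] by simp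
  qed
  fix t t' assume "t \<in> {..<3^m}" "t' \<in> {..<3^m}"
    and eq: "\<beta>^t div 3^j mod 3^m = \<beta>^t' div 3^j mod 3^m"
  have "\<beta>^t mod ?n = \<beta>^t' mod ?n"
    using mod_mult2_eq[of "\<beta>^t" "3^j" "3^m"] mod_mult2_eq[of "\<beta>^t'" "3^j" "3^m"]
    by (simp add: power_add eq low)
  then have "[t = t'] (mod ord ?n \<beta>)"
    using order_divides_expdiff[OF \<open>coprime ?n \<beta>\<close>] by (simp add: cong_def)
  then have "[t = t'] (mod 3^m)"
    using \<open>3^m dvd ord ?n \<beta>\<close> by (rule cong_dvd_modulus_nat)
  then show "t = t'"
    using \<open>t \<in> {..<3^m}\<close> \<open>t' \<in> {..<3^m}\<close> by (simp add: cong_less_modulus_unique_nat)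
qed

lemma digit_mod_power:
  fixes x b :: nat
  assumes "i < m"
  shows "(x mod b^m) div b^i mod b = x div b^i mod b"
proof (cases "b = 0")
  case True
  then show ?thesis using assms by (simp add: zero_power)
next
  case False
  have "x mod b^m = b^i * (x div b^i mod b^(m-i)) + x mod b^i"
    using mod_mult2_eq[of x "b^i" "b^(m-i)"] assms by (simp add: power_add[symmetric])
  then have "(x mod b^m) div b^i = x div b^i mod b^(m-i)"
    using False by simp
  moreover have "b dvd b^(m-i)"
    using assms by simp
  ultimately show ?thesis
    by (simp add: mod_mod_cancel)
qed

definition numbers_with_digits_in :: "nat \<Rightarrow> nat set \<Rightarrow> nat \<Rightarrow> nat set" where
  "numbers_with_digits_in b D m = {y. y < b^m \<and> (\<forall>i<m. y div b^i mod b \<in> D)}"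

lemma finite_numbers_with_digits_in: "finite (numbers_with_digits_in b D m)"
  unfolding numbers_with_digits_in_def by simp

lemma card_numbers_with_digits_in_le:
  assumes "finite D"
  shows "card (numbers_with_digits_in b D m) \<le> card D ^ m"
proof (induction m)
  case 0
  have "numbers_with_digits_in b D 0 \<subseteq> {0}"
    unfolding numbers_with_digits_in_def by auto
  then show ?case
    using card_mono[of "{0}"] by simp
next
  case (Suc m)
  have "numbers_with_digits_in b D (Suc m)
        \<subseteq> (\<lambda>(d, y). d + b*y) ` (D \<times> numbers_with_digits_in b D m)"
  proof
    fix y assume "y \<in> numbers_with_digits_in b D (Suc m)"
    then have y: "y < b^m * b" "\<And>i. i < Suc m \<Longrightarrow> y div b^i mod b \<in> D"
      unfolding numbers_with_digits_in_def by (auto simp: mult.commute)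
    have "y mod b \<in> D"
      using y(2)[of 0] by simp
    moreover have "y div b < b^m"
      using y(1) by (rule less_mult_imp_div_less)
    moreover have "y div b div b^i mod b \<in> D" if "i < m" for i
      using y(2)[of "Suc i"] that by (simp add: div_mult2_eq)
    ultimately have "(y mod b, y div b) \<in> D \<times> numbers_with_digits_in b D m"
      unfolding numbers_with_digits_in_def by simp
    then show "y \<in> (\<lambda>(d, y). d + b*y) ` (D \<times> numbers_with_digits_in b D m)"
      by (rule rev_image_eqI) simp
  qed
  then have "card (numbers_with_digits_in b D (Suc m))
             \<le> card ((\<lambda>(d, y). d + b*y) ` (D \<times> numbers_with_digits_in b D m))"
    using assms finite_numbers_with_digits_in by (intro card_mono) auto
  also have "\<dots> \<le> card (D \<times> numbers_with_digits_in b D m)"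
    using assms finite_numbers_with_digits_in by (intro card_image_le) simp
  also have "\<dots> \<le> card D ^ Suc m"
    using Suc.IH by (simp add: card_cartesian_product)
  finally show ?case .
qed

lemma card_pow_digits_in_le:
  fixes \<beta> m :: nat
  assumes "\<beta> mod 3 = 1" "\<beta> > 1" "finite D"
  shows "card {t. t < 3^m \<and> (\<forall>i. \<beta>^t div 3^i mod 3 \<in> D)} \<le> card D ^ m"
proof -
  let ?A = "{t. t < 3^m \<and> (\<forall>i. \<beta>^t div 3^i mod 3 \<in> D)}"
  obtain j c where "\<beta> = 1 + 3^j*c" "j \<ge> 1" "\<not> 3 dvd c"
    using one_plus_three_power_decomp[OF assms(1,2)] .
  then have inj: "inj_on (\<lambda>t. \<beta>^t div 3^j mod 3^m) {..<3^m}"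
    by (rule inj_on_pow_div_mod_three_power)
  let ?f = "\<lambda>t. \<beta>^t div 3^j mod 3^m"
  have image: "?f ` ?A \<subseteq> numbers_with_digits_in 3 D m"
  proof
    fix y assume "y \<in> ?f ` ?A"
    then obtain t where t: "t \<in> ?A" "y = ?f t" by blast
    have "y div 3^i mod 3 \<in> D" if "i < m" for i
    proof -
      have "y div 3^i mod 3 = \<beta>^t div 3^j div 3^i mod 3"
        unfolding t(2) by (rule digit_mod_power[OF that])
      also have "\<dots> = \<beta>^t div 3^(j+i) mod 3"
        by (simp only: div_mult2_eq power_add)
      finally show ?thesis
        using t(1) by simp
    qed
    then show "y \<in> numbers_with_digits_in 3 D m"
      unfolding numbers_with_digits_in_def by (simp add: t(2))
  qed
  have "inj_on ?f ?A"
    using inj by (rule inj_on_subset) auto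
  then have "card ?A = card (?f ` ?A)"
    by (simp add: card_image)
  also have "\<dots> \<le> card (numbers_with_digits_in 3 D m)"
    using finite_numbers_with_digits_in image by (rule card_mono)
  also have "\<dots> \<le> card D ^ m"
    using assms(3) by (rule card_numbers_with_digits_in_le)
  finally show ?thesis .
qed

lemma nonzero_digit_mem_digits:
  fixes p x i :: nat
  assumes "p \<ge> 2" "x div p^i mod p \<noteq> 0"
  shows "x div p^i mod p \<in> set (digits p x)"
  using assms(2)
proof (induction i arbitrary: x)
  case 0
  then have "x \<noteq> 0" by (cases "x = 0") auto
  then show ?case
    using assms(1) by (subst digits.simps) simp
next
  case (Suc i)
  then have "x \<noteq> 0" by (cases "x = 0") auto
  have "x div p^Suc i mod p = x div p div p^i mod p"
    by (simp add: div_mult2_eq)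
  then have "x div p^Suc i mod p \<in> set (digits p (x div p))"
    using Suc by simp
  then show ?case
    using \<open>x \<noteq> 0\<close> assms(1) by (subst digits.simps) simp
qed

lemma digit_small_if_num_large_digits_eq_0:
  fixes p x i :: nat
  assumes "num_large_digits p x = 0" "p \<ge> 2"
  shows "2 * (x div p^i mod p) < p"
proof (cases "x div p^i mod p = 0")
  case True
  then show ?thesis using assms(2) by simp
next
  case False
  then have "x div p^i mod p \<in> set (digits p x)"
    using assms(2) by (rule nonzero_digit_mem_digits[rotated])
  then show ?thesis
    using assms(1) by (auto simp: num_large_digits_def filter_empty_conv)
qed

lemma pow_mod_3_eq_2_if_odd:
  fixes \<alpha> s :: nat
  assumes "\<alpha> mod 3 = 2" "odd s"
  shows "\<alpha>^s mod 3 = 2"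
proof -
  obtain k where s: "s = 2*k + 1"
    using assms(2) by (rule oddE)
  have "\<alpha>^s mod 3 = 2 * 4^k mod 3"
    using assms(1) power_mod[of \<alpha> 3 s] by (simp add: s power_mult)
  also have "\<dots> = 2 * (4^k mod 3) mod 3"
    by (simp add: mod_mult_right_eq)
  also have "4^k mod 3 = (1::nat)"
    using power_mod[of "4::nat" 3 k] by simp
  finally show ?thesis by simp
qed

lemma S_3_1_le_two_power:
  fixes \<alpha> a m :: nat
  assumes "\<alpha> mod 3 = 2" "\<alpha> > 1" "a \<le> 2 * 3^m"
  shows "S \<alpha> 3 1 a \<le> 2^m"
proof -
  let ?\<beta> = "\<alpha>^2"
  let ?A = "{t. t < 3^m \<and> (\<forall>i. ?\<beta>^t div 3^i mod 3 \<in> {0, 1})}"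
  have "{s. s < a \<and> num_large_digits 3 (\<alpha>^s) < 1} \<subseteq> (\<lambda>t. 2*t) ` ?A"
  proof
    fix s assume s: "s \<in> {s. s < a \<and> num_large_digits 3 (\<alpha>^s) < 1}"
    then have small: "2 * (\<alpha>^s div 3^i mod 3) < 3" for i
      by (intro digit_small_if_num_large_digits_eq_0) auto
    then have "\<alpha>^s mod 3 \<noteq> 2"
      using small[of 0] by auto
    then obtain t where t: "s = 2*t"
      using pow_mod_3_eq_2_if_odd[OF assms(1)] by (auto elim: evenE)
    have "t < 3^m"
      using s assms(3) t by simp
    moreover have "?\<beta>^t div 3^i mod 3 \<in> {0, 1}" for i
    proof -
      have "2 * (?\<beta>^t div 3^i mod 3) < 3"
        using small[of i] by (simp add: t power_mult)
      then show ?thesis by auto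
    qed
    ultimately show "s \<in> (\<lambda>t. 2*t) ` ?A"
      using t by auto
  qed
  then have "S \<alpha> 3 1 a \<le> card ((\<lambda>t. 2*t) ` ?A)"
    unfolding S_def by (intro card_mono) auto
  also have "\<dots> \<le> card ?A"
    by (rule card_image_le) simp
  also have "\<dots> \<le> card {0, 1::nat} ^ m"
  proof (rule card_pow_digits_in_le)
    show "?\<beta> mod 3 = 1"
      using assms(1) power_mod[of \<alpha> 3 2] by simp
    show "?\<beta> > 1"
      using assms(2) one_less_power[of \<alpha> 2] by simp
  qed simp
  finally show ?thesis by (simp add: numeral_2_eq_2)
qed

lemma powr_divide_power:
  fixes x :: real and n d :: nat
  assumes "0 < x" "0 < d"
  shows "(x powr (n / d))^d = x^n"
proof -
  have "(x powr (n / d))^d = x powr (real d * (n / d))"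
    using assms(1) by (intro powr_power) simp
  also have "\<dots> = x powr real n"
    using assms(2) by simp
  also have "\<dots> = x^n"
    using assms(1) by (rule powr_realpow)
  finally show ?thesis .
qed

lemma log_3_2_ge: "5/8 \<le> log 3 (2::real)"
proof -
  have "(3 powr (5/8))^8 \<le> (2::real)^8"
    using powr_divide_power[of 3 8 5] by simp
  then have "3 powr (5/8) \<le> (2::real)"
    using power_mono_iff[of "3 powr (5/8)" "2::real" 8] by simp
  then show ?thesis
    by (subst le_log_iff) auto
qed

lemma two_powr_log_3_2_ge: "20/13 \<le> (2::real) powr log 3 2"
proof -
  have "(20/13)^8 \<le> (2 powr (5/8) :: real)^8"
    using powr_divide_power[of 2 8 5] by (simp add: power_divide divide_le_eq)
  then have "20/13 \<le> (2 powr (5/8) :: real)"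
    using power_mono_iff[of "20/13" "2 powr (5/8) :: real" 8] by simp
  also have "\<dots> \<le> 2 powr log 3 2"
    using log_3_2_ge by (intro powr_mono) auto
  finally show ?thesis .
qed

lemma power_powr_log:
  fixes b c :: real
  assumes "1 < b" "0 < c"
  shows "(b^k) powr log b c = c^k"
proof -
  have "(b^k) powr log b c = (b powr real k) powr log b c"
    using assms(1) by (simp add: powr_realpow)
  also have "\<dots> = (b powr log b c) powr real k"
    by (rule powr_powr_swap)
  also have "\<dots> = c^k"
    using assms by (simp add: powr_realpow)
  finally show ?thesis .
qed

lemma two_power_le_bound:
  fixes a k :: nat
  assumes "2 * 3^k < a"
  shows "(2::real)^Suc k \<le> 1.3 * real a powr log 3 2"
proof -
  let ?L = "log 3 (2::real)"
  have "(2::real)^Suc k = 1.3 * (20/13 * 2^k)"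
    by simp
  also have "\<dots> \<le> 1.3 * (2 powr ?L * 2^k)"
    using two_powr_log_3_2_ge by simp
  also have "2 powr ?L * 2^k = real (2 * 3^k) powr ?L"
    by (simp add: powr_mult power_powr_log)
  also have "\<dots> \<le> real a powr ?L"
    using assms of_nat_le_iff[of "2 * 3^k" a] by (intro powr_mono2) auto
  finally show ?thesis
    by simp
qed

lemma ex_power_bracket:
  fixes a b c :: nat
  assumes "1 < b" "0 < c" "c < a"
  obtains k where "c * b^k < a" "a \<le> c * b^Suc k"
proof -
  have "a < b^a"
    using assms(1) by (simp add: power_gt_expt)
  also have "b^a \<le> c * b^a"
    using assms(2) by simp
  finally have "\<exists>m. a \<le> c * b^m"
    by (auto intro: less_imp_le)
  define m where "m = (LEAST m. a \<le> c * b^m)"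
  have "a \<le> c * b^m"
    unfolding m_def using \<open>\<exists>m. a \<le> c * b^m\<close> by (rule LeastI_ex)
  moreover have "m \<noteq> 0"
    using \<open>a \<le> c * b^m\<close> assms(3) by (cases m) auto
  moreover have "c * b^(m - 1) < a"
    using not_less_Least[of "m - 1" "\<lambda>m. a \<le> c * b^m"] \<open>m \<noteq> 0\<close> by (simp add: m_def)
  ultimately show ?thesis
    using that[of "m - 1"] by simp
qed

theorem theorem2p6:
  fixes \<alpha> a :: nat
  assumes "\<alpha> > 1" and "\<alpha> mod 3 = 2" and "a > 0"
  shows "real (S \<alpha> 3 1 a) \<le> 1.3 * real a powr (log 3 2)"
proof -
  consider "a \<le> 2" | k where "2 * 3^k < a" "a \<le> 2 * 3^Suc k"
    using ex_power_bracket[of 3 2 a] by force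
  then show ?thesis
  proof cases
    case 1
    then have "S \<alpha> 3 1 a \<le> 1"
      using S_3_1_le_two_power[OF assms(2,1), of a 0] by simp
    moreover have "1 \<le> real a powr log 3 2"
      using assms(3) by (intro ge_one_powr_ge_zero) auto
    ultimately show ?thesis
      by simp
  next
    case 2
    then have "S \<alpha> 3 1 a \<le> 2^Suc k"
      by (intro S_3_1_le_two_power[OF assms(2,1)])
    then have "real (S \<alpha> 3 1 a) \<le> 2^Suc k"
      by (metis of_nat_le_iff of_nat_numeral of_nat_power)
    then show ?thesis
      using two_power_le_bound[OF 2(1)] by linarith
  qed
qed

end
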